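(* Let $H=(V,E,C,\ell)$ be an edge-colored hypergraph with $k=|C|$ colors and weights $w_e\ge0$, and let $x$ be an optimal solution of the \textsc{MinECC} LP relaxation, where if $k=2$ we additionally assume $x$ is a vertex (extreme point) of the feasible polytope. Let $Y$ be the output of GenColorRound applied to $x$ with interval $I=(\frac12,\frac34)$. Then $\mathbb E\left[\sum_{e\in E} w_e \mathbb 1[e\in\mathcal M_Y]\right] \le 2\left(1-\frac1k\right)\cdot \mathrm{OPT}$, where $\mathrm{OPT}$ is the optimal \textsc{MinECC} value. In fact, for $k\ge 3$, for every feasible LP solution $x$ and every edge $e\in E$, $\Pr[e\in\mathcal M_Y]\le 2\left(1-\frac1k\right)x_e$.
   Context: An edge-colored hypergraph is $H=(V,E,C,\ell)$ with node set $V$, a multiset $E$ of nonempty subsets of $V$, colors $C=[k]$, $\ell\colon E\to C$, weights $w_e\ge 0$. A node coloring $Y\colon V\to C$ makes a mistake at $e$ ($e\in\mathcal M_Y$) if some $v\in e$ has $Y[v]\ne\ell(e)$; \textsc{MinECC} minimizes $\sum_e w_e\mathbb 1[e\in\mathcal M_Y]$. The \textsc{MinECC} LP relaxation: minimize $\sum_e w_e x_e$ subject to $\sum_{i=1}^k x_v^i=k-1$ for all $v\in V$; $x_e\ge x_v^{\ell(e)}$ for all $e\in E$, $v\in e$; $0\le x_v^i\le1$; $0\le x_e\le 1$. GenColorRound with interval $I\subseteq[0,1]$, applied to a feasible LP solution $x$: draw $\rho$ uniformly at random from $I$ and, independently, a uniformly random permutation $\pi$ of $[k]$; let $S_i=\{v\in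 V: x_v^i<\rho\}$ (we say color $i$ wants $v$ if $x_v^i<\rho$); for each $v\in\bigcup_i S_i$ set $Y[v]=\pi(j)$ where $j$ is the largest index in $\{1,\dots,k\}$ with $v\in S_{\pi(j)}$ (i.e., colors later in $\pi$ have higher priority); nodes in no $S_i$ receive an arbitrary color. *)

theory Defs
  imports "HOL-Probability.Probability" "HOL-Combinatorics.Permutations"
begin

text \<open>Edge-colored hypergraph: node set V, edges indexed by a finite set Ed (so E may be a
multiset), ed e is the node set of edge e, lab e its color in {1..k}, w e its weight.
An LP solution is a pair (xv, xe) with xv v i = x_v^i and xe e = x_e.\<close>

definition hypergraph_ok ::
  "'v set \<Rightarrow> 'e set \<Rightarrow> ('e \<Rightarrow> 'v set) \<Rightarrow> ('e \<Rightarrow> nat) \<Rightarrow> nat \<Rightarrow> ('e \<Rightarrow> real) \<Rightarrow> bool" where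
  "hypergraph_ok V Ed ed lab k w \<longleftrightarrow> finite V \<and> finite Ed \<and>
     (\<forall>e\<in>Ed. ed e \<noteq> {} \<and> ed e \<subseteq> V \<and> lab e \<in> {1..k} \<and> w e \<ge> 0)"

definition lp_feasible ::
  "'v set \<Rightarrow> 'e set \<Rightarrow> ('e \<Rightarrow> 'v set) \<Rightarrow> ('e \<Rightarrow> nat) \<Rightarrow> nat
     \<Rightarrow> ('v \<Rightarrow> nat \<Rightarrow> real) \<Rightarrow> ('e \<Rightarrow> real) \<Rightarrow> bool" where
  "lp_feasible V Ed ed lab k xv xe \<longleftrightarrow>
     (\<forall>v\<in>V. (\<Sum>i=1..k. xv v i) = real k - 1) \<and>
     (\<forall>e\<in>Ed. \<forall>v\<in>ed e. xe e \<ge> xv v (lab e)) \<and>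
     (\<forall>v\<in>V. \<forall>i\<in>{1..k}. 0 \<le> xv v i \<and> xv v i \<le> 1) \<and>
     (\<forall>e\<in>Ed. 0 \<le> xe e \<and> xe e \<le> 1)"

definition lp_obj :: "'e set \<Rightarrow> ('e \<Rightarrow> real) \<Rightarrow> ('e \<Rightarrow> real) \<Rightarrow> real" where
  "lp_obj Ed w xe = (\<Sum>e\<in>Ed. w e * xe e)"

definition lp_optimal ::
  "'v set \<Rightarrow> 'e set \<Rightarrow> ('e \<Rightarrow> 'v set) \<Rightarrow> ('e \<Rightarrow> nat) \<Rightarrow> nat \<Rightarrow> ('e \<Rightarrow> real)
     \<Rightarrow> ('v \<Rightarrow> nat \<Rightarrow> real) \<Rightarrow> ('e \<Rightarrow> real) \<Rightarrow> bool" where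
  "lp_optimal V Ed ed lab k w xv xe \<longleftrightarrow> lp_feasible V Ed ed lab k xv xe \<and>
     (\<forall>yv ye. lp_feasible V Ed ed lab k yv ye \<longrightarrow> lp_obj Ed w xe \<le> lp_obj Ed w ye)"

definition lp_vertex ::
  "'v set \<Rightarrow> 'e set \<Rightarrow> ('e \<Rightarrow> 'v set) \<Rightarrow> ('e \<Rightarrow> nat) \<Rightarrow> nat
     \<Rightarrow> ('v \<Rightarrow> nat \<Rightarrow> real) \<Rightarrow> ('e \<Rightarrow> real) \<Rightarrow> bool" where
  "lp_vertex V Ed ed lab k xv xe \<longleftrightarrow> lp_feasible V Ed ed lab k xv xe \<and>
     (\<forall>yv ye zv ze t. lp_feasible V Ed ed lab k yv ye \<and> lp_feasible V Ed ed lab k zv ze \<and>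
        0 < t \<and> t < 1 \<and>
        (\<forall>v\<in>V. \<forall>i\<in>{1..k}. xv v i = t * yv v i + (1 - t) * zv v i) \<and>
        (\<forall>e\<in>Ed. xe e = t * ye e + (1 - t) * ze e)
      \<longrightarrow> (\<forall>v\<in>V. \<forall>i\<in>{1..k}. yv v i = zv v i) \<and> (\<forall>e\<in>Ed. ye e = ze e))"

definition mistake :: "('e \<Rightarrow> 'v set) \<Rightarrow> ('e \<Rightarrow> nat) \<Rightarrow> ('v \<Rightarrow> nat) \<Rightarrow> 'e \<Rightarrow> bool" where
  "mistake ed lab Y e \<longleftrightarrow> (\<exists>v\<in>ed e. Y v \<noteq> lab e)"

definition ecc_cost ::
  "'e set \<Rightarrow> ('e \<Rightarrow> 'v set) \<Rightarrow> ('e \<Rightarrow> nat) \<Rightarrow> ('e \<Rightarrow> real) \<Rightarrow> ('v \<Rightarrow> nat) \<Rightarrow> real" where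
  "ecc_cost Ed ed lab w Y = (\<Sum>e\<in>Ed. w e * (if mistake ed lab Y e then 1 else 0))"

definition ecc_opt ::
  "'v set \<Rightarrow> 'e set \<Rightarrow> ('e \<Rightarrow> 'v set) \<Rightarrow> ('e \<Rightarrow> nat) \<Rightarrow> nat \<Rightarrow> ('e \<Rightarrow> real) \<Rightarrow> real" where
  "ecc_opt V Ed ed lab k w = Min (ecc_cost Ed ed lab w ` (V \<rightarrow>\<^sub>E {1..k}))"

definition gcr_color ::
  "nat \<Rightarrow> ('v \<Rightarrow> nat \<Rightarrow> real) \<Rightarrow> (real \<Rightarrow> (nat \<Rightarrow> nat) \<Rightarrow> 'v \<Rightarrow> nat)
     \<Rightarrow> real \<Rightarrow> (nat \<Rightarrow> nat) \<Rightarrow> 'v \<Rightarrow> nat" where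
  "gcr_color k xv arb \<rho> \<pi> v =
     (if \<exists>i\<in>{1..k}. xv v i < \<rho> then \<pi> (Max {j\<in>{1..k}. xv v (\<pi> j) < \<rho>})
      else arb \<rho> \<pi> v)"

definition gcr_expect :: "nat \<Rightarrow> real set \<Rightarrow> (real \<Rightarrow> (nat \<Rightarrow> nat) \<Rightarrow> real) \<Rightarrow> real" where
  "gcr_expect k I f =
     measure_pmf.expectation (pmf_of_set {\<pi>. \<pi> permutes {1..k}})
       (\<lambda>\<pi>. integral\<^sup>L (uniform_measure lborel I) (\<lambda>\<rho>. f \<rho> \<pi>))"

end

theory Submission
  imports Defs
begin

text \<open>Fix an edge \<open>e\<close> of colour \<open>c\<close> and let \<open>m = max {x\<^sub>v\<^sup>c | v \<in> e} \<le> x\<^sub>e\<close>. A node of \<open>e\<close> misses colour \<open>c\<close>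
  only if \<open>c\<close> does not want it (\<open>\<rho> \<le> m\<close>), or \<open>c\<close> is not the top colour \<open>\<pi> k\<close> (probability
  \<open>1 - 1/k\<close>, independently of \<open>\<rho>\<close>) and another colour \<open>i\<close> wants it; as two LP values of a node
  sum to at least 1, the latter needs \<open>\<rho> > max m (1 - m)\<close>. For \<open>\<rho>\<close> uniform on \<open>(1/2, 3/4)\<close>
  and \<open>k \<ge> 3\<close> the resulting bound \<open>Pr[\<rho> \<le> m] + (1 - 1/k) Pr[\<rho> > max m (1 - m)]\<close> is at most
  \<open>2 (1 - 1/k) m\<close>, piecewise linearly in \<open>m\<close>. Summing over edges and using \<open>LP \<le> OPT\<close> gives the
  approximation bound. For \<open>k = 2\<close> a vertex of the LP polytope is integral, and on integral
  solutions the rounding only errs on edges with \<open>x\<^sub>e = 1\<close>; for \<open>k \<le> 1\<close> it never errs.\<close>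

lemma permutations_finite_nonempty:
  assumes "finite S"
  shows "finite {p. p permutes S}" and "{p. p permutes S} \<noteq> {}"
  using assms by (auto simp: finite_permutations intro: permutes_id)

lemma card_permutes_image_eq:
  assumes S: "finite S" and a: "a \<in> S" and b: "b \<in> S"
  shows "card {p. p permutes S \<and> p a = b} * card S = card {p. p permutes S}"
proof -
  let ?N = "\<lambda>c. {p. p permutes S \<and> p a = c}"
  have same_card: "card (?N c) = card (?N b)" if c: "c \<in> S" for c
  proof -
    let ?t = "Transposition.transpose c b"
    have t: "?t permutes S" using b c by (simp add: permutes_swap_id)
    have "bij_betw ((\<circ>) ?t) (?N c) (?N b)"
      by (rule bij_betw_byWitness[where f' = "(\<circ>) ?t"])
         (use t in \<open>auto simp: fun_eq_iff intro: permutes_compose\<close>)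
    then show ?thesis by (rule bij_betw_same_card)
  qed
  have "{p. p permutes S} = (\<Union>c\<in>S. ?N c)"
    using a by (auto dest: permutes_in_image)
  then have "card {p. p permutes S} = (\<Sum>c\<in>S. card (?N c))"
    using S by (simp only:) (rule card_UN_disjoint, auto simp: finite_permutations)
  also have "\<dots> = card (?N b) * card S"
    using same_card by simp
  finally show ?thesis ..
qed

lemma prob_permutes_image_neq:
  assumes S: "finite S" and a: "a \<in> S" and b: "b \<in> S"
  shows "measure_pmf.prob (pmf_of_set {p. p permutes S}) {p. p a \<noteq> b} = 1 - 1 / card S"
proof -
  let ?P = "{p. p permutes S}"
  have fin: "finite ?P" and ne: "?P \<noteq> {}"
    using permutations_finite_nonempty[OF S] by auto
  have "card S > 0" using S a by (auto simp: card_gt_0_iff)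
  then have "measure_pmf.prob (pmf_of_set ?P) {p. p a = b} = 1 / card S"
    using card_permutes_image_eq[OF assms] fin ne
    by (simp add: measure_pmf_of_set Int_def field_simps flip: of_nat_mult)
  moreover have "{p. p a \<noteq> b} = UNIV - {p. p a = b}" by auto
  ultimately show ?thesis
    by (metis measure_pmf.prob_compl sets_measure_pmf space_measure_pmf UNIV_I)
qed

lemma gcr_expect_eq_average:
  "gcr_expect k I f =
     (\<Sum>\<pi>\<in>{\<pi>. \<pi> permutes {1..k}}. integral\<^sup>L (uniform_measure lborel I) (\<lambda>\<rho>. f \<rho> \<pi>))
       / card {\<pi>. \<pi> permutes {1..k}}"
  using permutations_finite_nonempty[of "{1..k}"]
  by (simp add: gcr_expect_def integral_pmf_of_set)

lemma gcr_expect_const: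
  fixes a b :: real
  assumes "a < b"
  shows "gcr_expect k {a<..<b} (\<lambda>_ _. c) = c"
proof -
  interpret prob_space "uniform_measure lborel {a<..<b}"
    using assms by (intro prob_space_uniform_measure) auto
  show ?thesis unfolding gcr_expect_def using prob_space by simp
qed

text \<open>The smaller function need not be integrable: a non-integrable function has Bochner
  integral 0. This is why no measurability of the rounding in \<open>\<rho>\<close> is ever needed.\<close>

lemma gcr_expect_mono:
  fixes a b :: real
  assumes g_int: "\<And>\<pi>. \<pi> permutes {1..k} \<Longrightarrow> integrable (uniform_measure lborel {a<..<b}) (\<lambda>\<rho>. g \<rho> \<pi>)"
    and g_nonneg: "\<And>\<rho> \<pi>. \<pi> permutes {1..k} \<Longrightarrow> \<rho> \<in> {a<..<b} \<Longrightarrow> 0 \<le> g \<rho> \<pi>"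
    and le: "\<And>\<rho> \<pi>. \<pi> permutes {1..k} \<Longrightarrow> \<rho> \<in> {a<..<b} \<Longrightarrow> f \<rho> \<pi> \<le> g \<rho> \<pi>"
  shows "gcr_expect k {a<..<b} f \<le> gcr_expect k {a<..<b} g"
  unfolding gcr_expect_eq_average
proof (intro divide_right_mono sum_mono integral_mono_AE')
  fix \<pi> assume "\<pi> \<in> {\<pi>. \<pi> permutes {1..k}}"
  then show "integrable (uniform_measure lborel {a<..<b}) (\<lambda>\<rho>. g \<rho> \<pi>)"
    and "AE \<rho> in uniform_measure lborel {a<..<b}. f \<rho> \<pi> \<le> g \<rho> \<pi>"
    and "AE \<rho> in uniform_measure lborel {a<..<b}. 0 \<le> g \<rho> \<pi>"
    using assms by (auto intro!: AE_uniform_measureI)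
qed simp

lemma gcr_expect_const_bound:
  fixes a b :: real
  assumes "a < b" "0 \<le> c"
    and "\<And>\<rho> \<pi>. \<pi> permutes {1..k} \<Longrightarrow> \<rho> \<in> {a<..<b} \<Longrightarrow> f \<rho> \<pi> \<le> c"
  shows "gcr_expect k {a<..<b} f \<le> c"
proof -
  interpret prob_space "uniform_measure lborel {a<..<b}"
    using assms by (intro prob_space_uniform_measure) auto
  have "gcr_expect k {a<..<b} f \<le> gcr_expect k {a<..<b} (\<lambda>_ _. c)"
    using assms by (intro gcr_expect_mono) auto
  then show ?thesis using gcr_expect_const[OF \<open>a < b\<close>] by simp
qed

lemma gcr_expect_sum:
  assumes "\<And>e \<pi>. e \<in> E \<Longrightarrow> integrable (uniform_measure lborel I) (\<lambda>\<rho>. g e \<rho> \<pi>)"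
  shows "gcr_expect k I (\<lambda>\<rho> \<pi>. \<Sum>e\<in>E. w e * g e \<rho> \<pi>) = (\<Sum>e\<in>E. w e * gcr_expect k I (g e))"
  using assms unfolding gcr_expect_eq_average
  by (simp add: sum_divide_distrib sum_distrib_left sum.swap[of _ _ E] mult.left_commute)

lemma gcr_color_neq:
  assumes \<pi>: "\<pi> permutes {1..k}" and c: "c \<in> {1..k}"
    and neq: "gcr_color k xv arb \<rho> \<pi> v \<noteq> c"
  shows "\<rho> \<le> xv v c \<or> (\<pi> k \<noteq> c \<and> (\<exists>i\<in>{1..k}. i \<noteq> c \<and> xv v i < \<rho>))"
proof (cases "\<rho> \<le> xv v c")
  case False
  then have wants: "xv v c < \<rho>" by simp
  define J where "J = {j\<in>{1..k}. xv v (\<pi> j) < \<rho>}"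
  have "inv \<pi> c \<in> {1..k}"
    using c \<pi> by (simp only: permutes_in_image permutes_inv)
  then have "inv \<pi> c \<in> J"
    using wants \<pi> by (simp add: J_def permutes_inverses(1))
  then have "J \<noteq> {}" "finite J" by (auto simp: J_def)
  then have "Max J \<in> J" by (rule Max_in[rotated])
  moreover have "gcr_color k xv arb \<rho> \<pi> v = \<pi> (Max J)"
    using wants c unfolding gcr_color_def J_def by auto
  ultimately have top: "\<pi> (Max J) \<noteq> c" "xv v (\<pi> (Max J)) < \<rho>" and "Max J \<in> {1..k}"
    using neq by (auto simp: J_def)
  then have "\<pi> (Max J) \<in> {1..k}" by (simp only: permutes_in_image[OF \<pi>])
  have "\<pi> k \<noteq> c"
  proof
    assume "\<pi> k = c"
    then have "k \<in> J" using wants c by (auto simp: J_def)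
    then have "Max J = k"
      using \<open>finite J\<close> \<open>Max J \<in> J\<close> by (auto simp: J_def intro: antisym)
    with \<open>\<pi> k = c\<close> top(1) show False by simp
  qed
  with top \<open>\<pi> (Max J) \<in> {1..k}\<close> show ?thesis by blast
qed simp

lemma lp_feasible_two_values_ge_one:
  assumes F: "lp_feasible V Ed ed lab k xv xe" and v: "v \<in> V"
    and i: "i \<in> {1..k}" and c: "c \<in> {1..k}" and "i \<noteq> c"
  shows "1 \<le> xv v i + xv v c"
proof -
  have ic: "{i, c} \<subseteq> {1..k}" using i c by auto
  have card: "card ({1..k} - {i, c}) = k - 2"
    using ic \<open>i \<noteq> c\<close> by (simp add: card_Diff_subset)
  have "real k - 1 = (\<Sum>j=1..k. xv v j)"
    using F v by (simp add: lp_feasible_def)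
  also have "\<dots> = (\<Sum>j\<in>{1..k} - {i, c}. xv v j) + (\<Sum>j\<in>{i, c}. xv v j)"
    using ic by (intro sum.subset_diff) auto
  also have "\<dots> \<le> (\<Sum>j\<in>{1..k} - {i, c}. 1) + (xv v i + xv v c)"
    using F v \<open>i \<noteq> c\<close> by (intro add_mono sum_mono) (auto simp: lp_feasible_def)
  also have "\<dots> = real (k - 2) + (xv v i + xv v c)"
    using card by simp
  finally show ?thesis
    using i c \<open>i \<noteq> c\<close> by (simp add: of_nat_diff)
qed

lemma lp_feasible_coloring:
  assumes Y: "Y \<in> V \<rightarrow>\<^sub>E {1..k}"
  shows "lp_feasible V Ed ed lab k (\<lambda>v i. if Y v = i then 0 else 1)
           (\<lambda>e. if mistake ed lab Y e then 1 else 0)"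
  unfolding lp_feasible_def
proof (intro conjI ballI)
  fix v assume "v \<in> V"
  then have Yv: "Y v \<in> {1..k}" using Y by auto
  have "(\<Sum>i=1..k. if Y v = i then 0 else 1::real) = (\<Sum>i\<in>{1..k} - {Y v}. 1)"
    using Yv by (subst sum.remove[of _ "Y v"]) (auto intro: sum.cong)
  also have "\<dots> = real k - 1"
    using Yv by (simp add: of_nat_diff)
  finally show "(\<Sum>i=1..k. if Y v = i then 0 else 1::real) = real k - 1" .
qed (auto simp: mistake_def)

lemma lp_obj_le_ecc_opt:
  assumes H: "hypergraph_ok V Ed ed lab k w" and opt: "lp_optimal V Ed ed lab k w xv xe"
  shows "lp_obj Ed w xe \<le> ecc_opt V Ed ed lab k w"
  unfolding ecc_opt_def
proof (rule Min.boundedI)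
  show "finite (ecc_cost Ed ed lab w ` (V \<rightarrow>\<^sub>E {1..k}))"
    using H by (simp add: hypergraph_ok_def finite_PiE)
  have "k \<noteq> 0 \<or> V = {}"
    using opt by (force simp: lp_optimal_def lp_feasible_def)
  then have "(\<lambda>v\<in>V. 1) \<in> V \<rightarrow>\<^sub>E {1..k}" by auto
  then show "ecc_cost Ed ed lab w ` (V \<rightarrow>\<^sub>E {1..k}) \<noteq> {}" by blast
next
  fix c assume "c \<in> ecc_cost Ed ed lab w ` (V \<rightarrow>\<^sub>E {1..k})"
  then obtain Y where Y: "Y \<in> V \<rightarrow>\<^sub>E {1..k}" and c: "c = ecc_cost Ed ed lab w Y" by blast
  have "lp_obj Ed w xe \<le> lp_obj Ed w (\<lambda>e. if mistake ed lab Y e then 1 else 0)"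
    using opt lp_feasible_coloring[OF Y, of Ed ed lab] by (simp add: lp_optimal_def)
  then show "lp_obj Ed w xe \<le> c" by (simp add: c lp_obj_def ecc_cost_def)
qed

lemma lp_obj_nonneg:
  assumes "hypergraph_ok V Ed ed lab k w" "lp_feasible V Ed ed lab k xv xe"
  shows "0 \<le> lp_obj Ed w xe"
  using assms unfolding hypergraph_ok_def lp_feasible_def lp_obj_def
  by (intro sum_nonneg mult_nonneg_nonneg) auto

definition edge_max :: "('v \<Rightarrow> nat \<Rightarrow> real) \<Rightarrow> ('e \<Rightarrow> 'v set) \<Rightarrow> ('e \<Rightarrow> nat) \<Rightarrow> 'e \<Rightarrow> real" where
  "edge_max xv ed lab e = Max ((\<lambda>v. xv v (lab e)) ` ed e)"

lemma
  assumes H: "hypergraph_ok V Ed ed lab k w" and F: "lp_feasible V Ed ed lab k xv xe"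
    and e: "e \<in> Ed"
  shows edge_max_ge: "v \<in> ed e \<Longrightarrow> xv v (lab e) \<le> edge_max xv ed lab e"
    and edge_max_nonneg: "0 \<le> edge_max xv ed lab e"
    and edge_max_le: "edge_max xv ed lab e \<le> xe e"
proof -
  have fin: "finite (ed e)" and ne: "ed e \<noteq> {}" and sub: "ed e \<subseteq> V" and c: "lab e \<in> {1..k}"
    using H e unfolding hypergraph_ok_def by (auto intro: finite_subset)
  show ge: "xv v (lab e) \<le> edge_max xv ed lab e" if "v \<in> ed e" for v
    using fin that by (simp add: edge_max_def)
  obtain v where v: "v \<in> ed e" using ne by blast
  have "0 \<le> xv v (lab e)" using F sub v c by (auto simp: lp_feasible_def)
  then show "0 \<le> edge_max xv ed lab e" using ge[OF v] by linarith
  show "edge_max xv ed lab e \<le> xe e"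
    using fin ne F e by (simp add: edge_max_def lp_feasible_def)
qed

definition mistake_majorant :: "nat \<Rightarrow> nat \<Rightarrow> real \<Rightarrow> real \<Rightarrow> (nat \<Rightarrow> nat) \<Rightarrow> real" where
  "mistake_majorant k c m \<rho> \<pi> =
     indicator {..m} \<rho> + of_bool (\<pi> k \<noteq> c) * indicator {max m (1 - m)<..} \<rho>"

lemma mistake_majorant_nonneg: "0 \<le> mistake_majorant k c m \<rho> \<pi>"
  by (simp add: mistake_majorant_def)

lemma integrable_mistake_majorant:
  fixes a b :: real
  assumes "a < b"
  shows "integrable (uniform_measure lborel {a<..<b}) (\<lambda>\<rho>. mistake_majorant k c m \<rho> \<pi>)"
proof -
  interpret prob_space "uniform_measure lborel {a<..<b}"
    using assms by (intro prob_space_uniform_measure) auto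
  show ?thesis
    unfolding mistake_majorant_def
    by (intro Bochner_Integration.integrable_add integrable_mult_right integrable_real_indicator)
       (auto simp: emeasure_eq_measure)
qed

lemma mistake_le_mistake_majorant:
  assumes H: "hypergraph_ok V Ed ed lab k w" and F: "lp_feasible V Ed ed lab k xv xe"
    and e: "e \<in> Ed" and \<pi>: "\<pi> permutes {1..k}"
  shows "(if mistake ed lab (gcr_color k xv arb \<rho> \<pi>) e then 1 else 0)
           \<le> mistake_majorant k (lab e) (edge_max xv ed lab e) \<rho> \<pi>"
proof (cases "mistake ed lab (gcr_color k xv arb \<rho> \<pi>) e")
  case True
  define m where "m = edge_max xv ed lab e"
  have c: "lab e \<in> {1..k}" and sub: "ed e \<subseteq> V" using H e by (auto simp: hypergraph_ok_def)
  obtain v where v: "v \<in> ed e" and neq: "gcr_color k xv arb \<rho> \<pi> v \<noteq> lab e"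
    using True by (auto simp: mistake_def)
  have vm: "xv v (lab e) \<le> m" unfolding m_def by (rule edge_max_ge[OF H F e v])
  have "1 \<le> mistake_majorant k (lab e) m \<rho> \<pi>"
  proof (cases "\<rho> \<le> m")
    case False
    with gcr_color_neq[OF \<pi> c neq] vm
    obtain i where "\<pi> k \<noteq> lab e" "i \<in> {1..k}" "i \<noteq> lab e" "xv v i < \<rho>" by force
    moreover from this have "1 \<le> xv v i + xv v (lab e)"
      using lp_feasible_two_values_ge_one[OF F _ _ c] v sub by blast
    ultimately show ?thesis using False vm by (simp add: mistake_majorant_def)
  qed (simp add: mistake_majorant_def)
  then show ?thesis using True by (simp add: m_def)
qed (simp add: mistake_majorant_nonneg)

lemma gcr_expect_mistake_majorant:
  fixes a b :: real
  assumes "a < b" and c: "c \<in> {1..k}"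
  shows "gcr_expect k {a<..<b} (mistake_majorant k c m) =
    measure (uniform_measure lborel {a<..<b}) {..m}
      + (1 - 1 / real k) * measure (uniform_measure lborel {a<..<b}) {max m (1 - m)<..}"
proof -
  let ?U = "uniform_measure lborel {a<..<b}"
  let ?P = "pmf_of_set {\<pi>. \<pi> permutes {1..k}}"
  interpret prob_space ?U
    using assms by (intro prob_space_uniform_measure) auto
  have inner: "integral\<^sup>L ?U (\<lambda>\<rho>. mistake_majorant k c m \<rho> \<pi>) =
      measure ?U {..m} + of_bool (\<pi> k \<noteq> c) * measure ?U {max m (1 - m)<..}" for \<pi>
    unfolding mistake_majorant_def
    by (subst Bochner_Integration.integral_add)
       (auto intro!: integrable_real_indicator simp: emeasure_eq_measure)
  have "(\<lambda>\<pi>. of_bool (\<pi> k \<noteq> c) :: real) = indicator {\<pi>. \<pi> k \<noteq> c}"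
    by (auto simp: indicator_def)
  then have "measure_pmf.expectation ?P (\<lambda>\<pi>. of_bool (\<pi> k \<noteq> c) :: real) = 1 - 1 / real k"
    using prob_permutes_image_neq[of "{1..k}" k c] c by simp
  moreover have "finite (set_pmf ?P)"
    using permutations_finite_nonempty[of "{1..k}"] by simp
  ultimately show ?thesis
    unfolding gcr_expect_def inner
    by (subst Bochner_Integration.integral_add) (auto intro: integrable_measure_pmf_finite)
qed

lemma measure_uniform_half_to_3quarters_atMost:
  "measure (uniform_measure lborel {1/2<..<3/4}) {..m} =
     (if m \<le> 1/2 then 0 else if m < 3/4 then 4 * (m - 1/2) else 1)"
proof -
  consider "m \<le> 1/2" | "1/2 < m" "m < 3/4" | "3/4 \<le> m" by linarith
  then have "{1/2<..<3/4} \<inter> {..m} =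
      (if m \<le> 1/2 then {} else if m < 3/4 then {1/2<..m} else {1/2<..<3/4::real})"
    by cases auto
  then show ?thesis by simp
qed

lemma measure_uniform_half_to_3quarters_greaterThan:
  assumes "1/2 \<le> r"
  shows "measure (uniform_measure lborel {1/2<..<3/4}) {r<..} = (if r < 3/4 then 4 * (3/4 - r) else 0)"
proof -
  have "{1/2<..<3/4} \<inter> {r<..} = (if r < 3/4 then {r<..<3/4} else {})"
    using assms by auto
  then show ?thesis by simp
qed

lemma majorant_mass_half_to_3quarters_le:
  fixes m a :: real
  assumes m: "0 \<le> m" and a: "2/3 \<le> a"
  shows "measure (uniform_measure lborel {1/2<..<3/4}) {..m}
           + a * measure (uniform_measure lborel {1/2<..<3/4}) {max m (1 - m)<..} \<le> 2 * a * m"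
proof -
  have "1/2 \<le> max m (1 - m)" by (simp add: max_def)
  then have B: "measure (uniform_measure lborel {1/2<..<3/4}) {max m (1 - m)<..} =
      (if max m (1 - m) < 3/4 then 4 * (3/4 - max m (1 - m)) else 0)"
    by (rule measure_uniform_half_to_3quarters_greaterThan)
  note masses = measure_uniform_half_to_3quarters_atMost B
  consider "m \<le> 1/4" | "1/4 < m" "m \<le> 1/2" | "1/2 < m" "m < 3/4" | "3/4 \<le> m" by linarith
  then show ?thesis
  proof cases
    case 1
    then show ?thesis unfolding masses using m a by (simp add: max_def)
  next
    case 2
    have "a * (4 * m - 1) \<le> a * (2 * m)" using 2 a by (intro mult_left_mono) auto
    then show ?thesis unfolding masses using 2 by (simp add: max_def algebra_simps)
  next
    case 3
    have "0 \<le> (6 * a - 4) * (m - 1/2)" using 3 a by (intro mult_nonneg_nonneg) auto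
    then show ?thesis unfolding masses using 3 by (simp add: max_def algebra_simps)
  next
    case 4
    have "0 \<le> (a - 2/3) * (m - 3/4)" using 4 a by (intro mult_nonneg_nonneg) auto
    then show ?thesis unfolding masses using 4 a by (simp add: max_def algebra_simps)
  qed
qed

lemma one_minus_inverse_nonneg: "0 \<le> 1 - 1 / real k"
  by (cases k) (simp_all add: field_simps)

lemma gcr_expect_mistake_majorant_le:
  assumes H: "hypergraph_ok V Ed ed lab k w" and F: "lp_feasible V Ed ed lab k xv xe"
    and e: "e \<in> Ed" and k: "3 \<le> k"
  shows "gcr_expect k {1/2<..<3/4} (mistake_majorant k (lab e) (edge_max xv ed lab e))
           \<le> 2 * (1 - 1 / real k) * xe e"
proof -
  let ?m = "edge_max xv ed lab e" and ?U = "uniform_measure lborel {1/2<..<3/4::real}"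
  have "gcr_expect k {1/2<..<3/4} (mistake_majorant k (lab e) ?m) =
      measure ?U {..?m} + (1 - 1 / real k) * measure ?U {max ?m (1 - ?m)<..}"
    using H e by (intro gcr_expect_mistake_majorant) (auto simp: hypergraph_ok_def)
  also have "\<dots> \<le> 2 * (1 - 1 / real k) * ?m"
    using k edge_max_nonneg[OF H F e]
    by (intro majorant_mass_half_to_3quarters_le) (auto simp: field_simps)
  also have "\<dots> \<le> 2 * (1 - 1 / real k) * xe e"
    using edge_max_le[OF H F e] one_minus_inverse_nonneg[of k] by (intro mult_left_mono) auto
  finally show ?thesis .
qed

lemma gcr_mistake_prob_le:
  assumes H: "hypergraph_ok V Ed ed lab k w" and F: "lp_feasible V Ed ed lab k xv xe"
    and e: "e \<in> Ed" and k: "3 \<le> k"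
  shows "gcr_expect k {1/2<..<3/4}
           (\<lambda>\<rho> \<pi>. if mistake ed lab (gcr_color k xv arb \<rho> \<pi>) e then 1 else 0)
         \<le> 2 * (1 - 1 / real k) * xe e"
proof -
  have "gcr_expect k {1/2<..<3/4}
           (\<lambda>\<rho> \<pi>. if mistake ed lab (gcr_color k xv arb \<rho> \<pi>) e then 1 else 0)
        \<le> gcr_expect k {1/2<..<3/4} (mistake_majorant k (lab e) (edge_max xv ed lab e))"
    by (intro gcr_expect_mono integrable_mistake_majorant mistake_majorant_nonneg
        mistake_le_mistake_majorant[OF H F e]) simp_all
  also have "\<dots> \<le> 2 * (1 - 1 / real k) * xe e"
    by (rule gcr_expect_mistake_majorant_le[OF H F e k])
  finally show ?thesis .
qed

lemma gcr_expected_cost_le: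
  assumes H: "hypergraph_ok V Ed ed lab k w" and F: "lp_feasible V Ed ed lab k xv xe"
    and k: "3 \<le> k"
  shows "gcr_expect k {1/2<..<3/4} (\<lambda>\<rho> \<pi>. ecc_cost Ed ed lab w (gcr_color k xv arb \<rho> \<pi>))
           \<le> 2 * (1 - 1 / real k) * lp_obj Ed w xe"
proof -
  define h where "h e = mistake_majorant k (lab e) (edge_max xv ed lab e)" for e
  have w: "\<And>e. e \<in> Ed \<Longrightarrow> 0 \<le> w e" using H by (simp add: hypergraph_ok_def)
  have "gcr_expect k {1/2<..<3/4} (\<lambda>\<rho> \<pi>. ecc_cost Ed ed lab w (gcr_color k xv arb \<rho> \<pi>))
        \<le> gcr_expect k {1/2<..<3/4} (\<lambda>\<rho> \<pi>. \<Sum>e\<in>Ed. w e * h e \<rho> \<pi>)"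
    unfolding ecc_cost_def h_def
    by (intro gcr_expect_mono Bochner_Integration.integrable_sum integrable_mult_right
        integrable_mistake_majorant sum_nonneg sum_mono mult_nonneg_nonneg mult_left_mono
        mistake_majorant_nonneg mistake_le_mistake_majorant[OF H F]) (simp_all add: w)
  also have "\<dots> = (\<Sum>e\<in>Ed. w e * gcr_expect k {1/2<..<3/4} (h e))"
    unfolding h_def by (intro gcr_expect_sum integrable_mistake_majorant) simp
  also have "\<dots> \<le> (\<Sum>e\<in>Ed. w e * (2 * (1 - 1 / real k) * xe e))"
    unfolding h_def
    by (intro sum_mono mult_left_mono gcr_expect_mistake_majorant_le[OF H F _ k]) (simp_all add: w)
  also have "\<dots> = 2 * (1 - 1 / real k) * lp_obj Ed w xe"
    by (simp add: lp_obj_def sum_distrib_left mult.left_commute)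
  finally show ?thesis .
qed

lemma gcr_mistake_integral:
  assumes F: "lp_feasible V Ed ed lab k xv xe" and "ed e \<subseteq> V" and c: "lab e \<in> {1..k}"
    and \<pi>: "\<pi> permutes {1..k}" and \<rho>: "0 < \<rho>" "\<rho> < 1"
    and integral: "\<And>v i. v \<in> V \<Longrightarrow> i \<in> {1..k} \<Longrightarrow> xv v i = 0 \<or> xv v i = 1"
    and "mistake ed lab (gcr_color k xv arb \<rho> \<pi>) e"
  shows "\<exists>v\<in>ed e. xv v (lab e) = 1"
proof -
  obtain v where v: "v \<in> ed e" "v \<in> V" and neq: "gcr_color k xv arb \<rho> \<pi> v \<noteq> lab e"
    using assms by (auto simp: mistake_def)
  from gcr_color_neq[OF \<pi> c neq] have "xv v (lab e) = 1"
  proof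
    assume "\<rho> \<le> xv v (lab e)"
    then show ?thesis using integral[OF v(2) c] \<rho> by auto
  next
    assume "\<pi> k \<noteq> lab e \<and> (\<exists>i\<in>{1..k}. i \<noteq> lab e \<and> xv v i < \<rho>)"
    then obtain i where i: "i \<in> {1..k}" "i \<noteq> lab e" "xv v i < \<rho>" by blast
    then have "xv v i = 0" using integral[OF v(2) i(1)] \<rho> by auto
    then show ?thesis
      using lp_feasible_two_values_ge_one[OF F v(2) i(1) c i(2)] integral[OF v(2) c] by auto
  qed
  with v show ?thesis by blast
qed

lemma gcr_expected_cost_le_lp_obj_integral:
  fixes a b :: real
  assumes H: "hypergraph_ok V Ed ed lab k w" and F: "lp_feasible V Ed ed lab k xv xe"
    and integral: "\<And>v i. v \<in> V \<Longrightarrow> i \<in> {1..k} \<Longrightarrow> xv v i = 0 \<or> xv v i = 1"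
    and ab: "0 \<le> a" "a < b" "b \<le> 1"
  shows "gcr_expect k {a<..<b} (\<lambda>\<rho> \<pi>. ecc_cost Ed ed lab w (gcr_color k xv arb \<rho> \<pi>))
           \<le> lp_obj Ed w xe"
proof (rule gcr_expect_const_bound[OF ab(2) lp_obj_nonneg[OF H F]])
  fix \<rho> \<pi> assume \<pi>: "\<pi> permutes {1..k}" and \<rho>: "\<rho> \<in> {a<..<b}"
  have "(if mistake ed lab (gcr_color k xv arb \<rho> \<pi>) e then 1 else 0) \<le> xe e" if e: "e \<in> Ed" for e
  proof -
    have "ed e \<subseteq> V" "lab e \<in> {1..k}" using H e by (auto simp: hypergraph_ok_def)
    note mistake_forces_one = gcr_mistake_integral[OF F this \<pi> _ _ integral]
    have "0 < \<rho>" "\<rho> < 1" using \<rho> ab by auto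
    show ?thesis
    proof (cases "mistake ed lab (gcr_color k xv arb \<rho> \<pi>) e")
      case True
      then obtain v where "v \<in> ed e" "xv v (lab e) = 1"
        using mistake_forces_one \<open>0 < \<rho>\<close> \<open>\<rho> < 1\<close> by blast
      then show ?thesis using F e True unfolding lp_feasible_def by fastforce
    qed (use F e in \<open>simp add: lp_feasible_def\<close>)
  qed
  then show "ecc_cost Ed ed lab w (gcr_color k xv arb \<rho> \<pi>) \<le> lp_obj Ed w xe"
    using H unfolding ecc_cost_def lp_obj_def hypergraph_ok_def
    by (intro sum_mono mult_left_mono) auto
qed

lemma gcr_no_mistake_single_color:
  assumes H: "hypergraph_ok V Ed ed lab k w" and F: "lp_feasible V Ed ed lab k xv xe"
    and k: "k \<le> 1" and e: "e \<in> Ed" and \<pi>: "\<pi> permutes {1..k}" and \<rho>: "0 < \<rho>" "\<rho> < 1"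
  shows "\<not> mistake ed lab (gcr_color k xv arb \<rho> \<pi>) e"
proof
  have sub: "ed e \<subseteq> V" and c: "lab e \<in> {1..k}" using H e by (auto simp: hypergraph_ok_def)
  then have "k = 1" "lab e = 1" using k by auto
  then have zero: "xv v i = 0" if "v \<in> V" "i \<in> {1..k}" for v i
    using F that by (simp add: lp_feasible_def)
  assume "mistake ed lab (gcr_color k xv arb \<rho> \<pi>) e"
  with gcr_mistake_integral[OF F sub c \<pi> \<rho>] zero have "\<exists>v\<in>ed e. xv v (lab e) = 1" by blast
  then show False using zero sub c by fastforce
qed

lemma two_color_rescaled_feasible:
  fixes \<phi> :: "real \<Rightarrow> real"
  assumes H: "hypergraph_ok V Ed ed lab 2 w" and F: "lp_feasible V Ed ed lab 2 xv xe"
    and mono: "mono_on {0..1} \<phi>" and range: "\<phi> ` {0..1} \<subseteq> {0..1}"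
  shows "lp_feasible V Ed ed lab 2 (\<lambda>u (i::nat). if i = 1 then \<phi> (xv u 1) else 1 - \<phi> (xv u 1))
           (\<lambda>e. if lab e = 1 then \<phi> (xe e) else 1 - \<phi> (1 - xe e))"
proof -
  have sum: "xv u 1 + xv u 2 = 1" if "u \<in> V" for u
    using F that by (simp add: lp_feasible_def numeral_2_eq_2)
  have unit: "0 \<le> xv u i \<and> xv u i \<le> 1" if "u \<in> V" "i \<in> {1..2}" for u i
    using F that by (simp add: lp_feasible_def)
  have unit_e: "0 \<le> xe e \<and> xe e \<le> 1" if "e \<in> Ed" for e
    using F that by (simp add: lp_feasible_def)
  have le: "\<phi> s \<le> \<phi> t" if "0 \<le> s" "s \<le> t" "t \<le> 1" for s t
    using mono that by (auto intro: mono_onD)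
  have unit_\<phi>: "0 \<le> \<phi> t \<and> \<phi> t \<le> 1" if "0 \<le> t" "t \<le> 1" for t
    using range that by (simp add: image_subset_iff)
  show ?thesis
    unfolding lp_feasible_def
  proof (intro conjI ballI)
    fix u assume "u \<in> V"
    then show "(\<Sum>i::nat=1..2. if i = 1 then \<phi> (xv u 1) else 1 - \<phi> (xv u 1)) = real 2 - 1"
      by (simp add: numeral_2_eq_2)
  next
    fix e u assume e: "e \<in> Ed" and u: "u \<in> ed e"
    then have uV: "u \<in> V" and c: "lab e = 1 \<or> lab e = 2"
      using H by (auto simp: hypergraph_ok_def)
    have "xv u (lab e) \<le> xe e" using F e u by (simp add: lp_feasible_def)
    then show "(if lab e = 1 then \<phi> (xv u 1) else 1 - \<phi> (xv u 1))
        \<le> (if lab e = 1 then \<phi> (xe e) else 1 - \<phi> (1 - xe e))"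
      using c le sum[OF uV] unit[OF uV, of 1] unit[OF uV, of 2] unit_e[OF e] by auto
  next
    fix u i assume "u \<in> V" "i \<in> {1..2::nat}"
    then show "0 \<le> (if i = 1 then \<phi> (xv u 1) else 1 - \<phi> (xv u 1))"
      and "(if i = 1 then \<phi> (xv u 1) else 1 - \<phi> (xv u 1)) \<le> 1"
      using unit_\<phi> unit[of u 1] by auto
  next
    fix e assume "e \<in> Ed"
    then show "0 \<le> (if lab e = 1 then \<phi> (xe e) else 1 - \<phi> (1 - xe e))"
      and "(if lab e = 1 then \<phi> (xe e) else 1 - \<phi> (1 - xe e)) \<le> 1"
      using unit_\<phi> unit_e by auto
  qed
qed

text \<open>A fractional value \<open>s = x\<^sub>v\<^sup>1\<close> would write \<open>x\<close> as \<open>s y + (1 - s) z\<close>, where \<open>y\<close> and \<open>z\<close>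
  rescale all first-colour values by \<open>t \<mapsto> min (t/s) 1\<close> and \<open>t \<mapsto> max ((t-s)/(1-s)) 0\<close>; these
  two feasible points differ at \<open>v\<close>.\<close>

lemma lp_vertex_two_colors_integral:
  assumes H: "hypergraph_ok V Ed ed lab 2 w" and vx: "lp_vertex V Ed ed lab 2 xv xe"
    and v: "v \<in> V" and i: "i \<in> {1..2}"
  shows "xv v i = 0 \<or> xv v i = 1"
proof -
  have F: "lp_feasible V Ed ed lab 2 xv xe" using vx by (simp add: lp_vertex_def)
  have sum: "xv u 1 + xv u 2 = 1" if "u \<in> V" for u
    using F that by (simp add: lp_feasible_def numeral_2_eq_2)
  have unit: "0 \<le> xv v 1" "xv v 1 \<le> 1" using F v by (simp_all add: lp_feasible_def)
  have "xv v 1 = 0 \<or> xv v 1 = 1"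
  proof (rule ccontr)
    assume frac: "\<not> (xv v 1 = 0 \<or> xv v 1 = 1)"
    define s where "s = xv v 1"
    have s: "0 < s" "s < 1" using unit frac by (auto simp: s_def)
    define f1 where "f1 t = min (t / s) 1" for t
    define f2 where "f2 t = max ((t - s) / (1 - s)) 0" for t
    have mix: "s * f1 t + (1 - s) * f2 t = t" for t
    proof (cases "t \<le> s")
      case True
      then have "f1 t = t / s" "f2 t = 0"
        using s by (auto simp: f1_def f2_def divide_le_eq divide_le_0_iff)
      then show ?thesis using s by simp
    next
      case False
      then have "f1 t = 1" "f2 t = (t - s) / (1 - s)"
        using s by (auto simp: f1_def f2_def divide_le_eq)
      then show ?thesis using s by (simp add: field_simps)
    qed
    have "mono f1" "mono f2"
      using s unfolding f1_def f2_def
      by (auto intro!: monoI min.mono max.mono divide_right_mono)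
    then have mono: "mono_on {0..1} f1" "mono_on {0..1} f2"
      by (auto intro: mono_on_subset)
    have range: "f1 ` {0..1} \<subseteq> {0..1}" "f2 ` {0..1} \<subseteq> {0..1}"
      using s by (auto simp: f1_def f2_def divide_le_eq)
    define rv where "rv \<phi> u i = (if i = 1 then \<phi> (xv u 1) else 1 - \<phi> (xv u 1))"
      for \<phi> :: "real \<Rightarrow> real" and u and i :: nat
    define re where "re \<phi> e = (if lab e = 1 then \<phi> (xe e) else 1 - \<phi> (1 - xe e))"
      for \<phi> :: "real \<Rightarrow> real" and e
    have feasible: "lp_feasible V Ed ed lab 2 (rv f1) (re f1)" "lp_feasible V Ed ed lab 2 (rv f2) (re f2)"
      unfolding rv_def re_def using two_color_rescaled_feasible[OF H F] mono range by auto
    have no_split: "\<forall>u\<in>V. \<forall>i\<in>{1..2}. yv u i = zv u i"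
      if "lp_feasible V Ed ed lab 2 yv ye" "lp_feasible V Ed ed lab 2 zv ze"
        "\<forall>u\<in>V. \<forall>i\<in>{1..2}. xv u i = s * yv u i + (1 - s) * zv u i"
        "\<forall>e\<in>Ed. xe e = s * ye e + (1 - s) * ze e" for yv ye zv ze
      using vx that s unfolding lp_vertex_def by blast
    have "\<forall>u\<in>V. \<forall>i\<in>{1..2}. xv u i = s * rv f1 u i + (1 - s) * rv f2 u i"
    proof (intro ballI)
      fix u i assume "u \<in> V" "i \<in> {1..2::nat}"
      moreover from this have "i = 1 \<or> i = 2" by auto
      ultimately show "xv u i = s * rv f1 u i + (1 - s) * rv f2 u i"
        using mix[of "xv u 1"] sum by (auto simp: rv_def algebra_simps)
    qed
    moreover have "\<forall>e\<in>Ed. xe e = s * re f1 e + (1 - s) * re f2 e"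
      using mix by (auto simp: re_def algebra_simps)
    ultimately have "rv f1 v 1 = rv f2 v 1"
      using no_split[OF feasible] v by simp
    moreover have "f1 s = 1" "f2 s = 0" using s by (simp_all add: f1_def f2_def)
    ultimately show False by (simp add: rv_def s_def)
  qed
  moreover have "i = 1 \<or> i = 2" using i by auto
  ultimately show ?thesis using sum[OF v] by auto
qed

theorem theorem2:
  fixes V :: "'v set" and Ed :: "'e set" and ed :: "'e \<Rightarrow> 'v set" and lab :: "'e \<Rightarrow> nat"
    and k :: nat and w :: "'e \<Rightarrow> real"
    and xv :: "'v \<Rightarrow> nat \<Rightarrow> real" and xe :: "'e \<Rightarrow> real"
    and arb :: "real \<Rightarrow> (nat \<Rightarrow> nat) \<Rightarrow> 'v \<Rightarrow> nat"
  assumes H: "hypergraph_ok V Ed ed lab k w"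
    and arb_col: "\<And>\<rho> \<pi> v. v \<in> V \<Longrightarrow> arb \<rho> \<pi> v \<in> {1..k}"
    and arb_meas: "\<And>\<pi> v. (\<lambda>\<rho>. arb \<rho> \<pi> v) \<in> measurable borel (count_space UNIV)"
    and opt: "lp_optimal V Ed ed lab k w xv xe"
    and vert: "k = 2 \<Longrightarrow> lp_vertex V Ed ed lab k xv xe"
  shows "(gcr_expect k {1/2<..<3/4}
           (\<lambda>\<rho> \<pi>. ecc_cost Ed ed lab w (gcr_color k xv arb \<rho> \<pi>))
         \<le> 2 * (1 - 1 / real k) * ecc_opt V Ed ed lab k w) \<and>
         (k \<ge> 3 \<longrightarrow> (\<forall>yv ye. lp_feasible V Ed ed lab k yv ye \<longrightarrow> (\<forall>e\<in>Ed.
           gcr_expect k {1/2<..<3/4}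
             (\<lambda>\<rho> \<pi>. if mistake ed lab (gcr_color k yv arb \<rho> \<pi>) e then 1 else 0)
           \<le> 2 * (1 - 1 / real k) * ye e)))"
proof (intro conjI impI allI ballI)
  fix yv ye e assume "3 \<le> k" "lp_feasible V Ed ed lab k yv ye" "e \<in> Ed"
  then show "gcr_expect k {1/2<..<3/4}
      (\<lambda>\<rho> \<pi>. if mistake ed lab (gcr_color k yv arb \<rho> \<pi>) e then 1 else 0) \<le> 2 * (1 - 1 / real k) * ye e"
    by (intro gcr_mistake_prob_le[OF H])
next
  have F: "lp_feasible V Ed ed lab k xv xe" using opt by (simp add: lp_optimal_def)
  have lp_le_opt: "lp_obj Ed w xe \<le> ecc_opt V Ed ed lab k w" by (rule lp_obj_le_ecc_opt[OF H opt])
  have ratio: "0 \<le> 2 * (1 - 1 / real k)" using one_minus_inverse_nonneg[of k] by simp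
  consider "k \<le> 1" | "k = 2" | "3 \<le> k" by linarith
  then show "gcr_expect k {1/2<..<3/4} (\<lambda>\<rho> \<pi>. ecc_cost Ed ed lab w (gcr_color k xv arb \<rho> \<pi>))
      \<le> 2 * (1 - 1 / real k) * ecc_opt V Ed ed lab k w"
  proof cases
    case 1
    then have "gcr_expect k {1/2<..<3/4} (\<lambda>\<rho> \<pi>. ecc_cost Ed ed lab w (gcr_color k xv arb \<rho> \<pi>)) \<le> 0"
      by (intro gcr_expect_const_bound) (auto simp: ecc_cost_def gcr_no_mistake_single_color[OF H F])
    moreover have "0 \<le> ecc_opt V Ed ed lab k w"
      using lp_le_opt lp_obj_nonneg[OF H F] by linarith
    ultimately show ?thesis using mult_nonneg_nonneg[OF ratio] by fastforce
  next
    case 2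
    then have "gcr_expect k {1/2<..<3/4} (\<lambda>\<rho> \<pi>. ecc_cost Ed ed lab w (gcr_color k xv arb \<rho> \<pi>))
        \<le> lp_obj Ed w xe"
      using H F lp_vertex_two_colors_integral[of V Ed ed lab w xv xe] vert
      by (intro gcr_expected_cost_le_lp_obj_integral) auto
    then show ?thesis using 2 lp_le_opt by simp
  next
    case 3
    have "gcr_expect k {1/2<..<3/4} (\<lambda>\<rho> \<pi>. ecc_cost Ed ed lab w (gcr_color k xv arb \<rho> \<pi>))
        \<le> 2 * (1 - 1 / real k) * lp_obj Ed w xe"
      by (rule gcr_expected_cost_le[OF H F 3])
    also have "\<dots> \<le> 2 * (1 - 1 / real k) * ecc_opt V Ed ed lab k w"
      using lp_le_opt ratio by (rule mult_left_mono)
    finally show ?thesis .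
  qed
qed

end
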